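(* Let $N\ge 1$ be an integer, let $\mathbf{h}_{s},\mathbf{h}_{b}\in\mathbb{C}^{N\times 1}$ be nonzero vectors, and set $\mathbf{H}_{s}=\mathbf{h}_{s}\mathbf{h}_{s}^H$ and $\mathbf{H}_{b}=\mathbf{h}_{b}\mathbf{h}_{b}^H$. Let $N^{no}>0$, $\Gamma_{s,0}>0$ and $\Gamma_{b,0}>0$ be real constants. Consider the semidefinite program $$\min_{\mathbf{W}_{s},\mathbf{W}_{b}} \ \operatorname{Tr}(\mathbf{W}_{s})+\operatorname{Tr}(\mathbf{W}_{b})$$ over $N\times N$ Hermitian matrices $\mathbf{W}_{s},\mathbf{W}_{b}$, subject to $$\operatorname{Tr}(\mathbf{H}_{s}\mathbf{W}_{s})\ge N^{no}\Gamma_{s,0},$$ $$\operatorname{Tr}(\mathbf{H}_{s}\mathbf{W}_{b})\ge \Gamma_{b,0}\operatorname{Tr}(\mathbf{H}_{s}\mathbf{W}_{s})+N^{no}\Gamma_{b,0},$$ $$\operatorname{Tr}(\mathbf{H}_{b}\mathbf{W}_{b})\ge \Gamma_{b,0}\operatorname{Tr}(\mathbf{H}_{b}\mathbf{W}_{s})+N^{no}\Gamma_{b,0},$$ $$\mathbf{W}_{s}\succeq 0,\qquad \mathbf{W}_{b}\succeq 0.$$ Then this problem has an optimal solution $(\mathbf{W}_{s}^{*},\mathbf{W}_{b}^{*})$ with $\operatorname{rank}(\mathbf{W}_{s}^{*})=\operatorname{rank}(\mathbf{W}_{b}^{*})=1$.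
   Context: This is the semidefinite relaxation (rank-one constraints dropped) of the per-cluster NOMA-period power minimization in a downlink multi-antenna system: the base station has $N$ antennas and serves, in a cluster, a semantic user with channel $\mathbf{h}_{s}$ and a bit-based user with channel $\mathbf{h}_{b}$ using beamformers $\mathbf{w}_s,\mathbf{w}_b$, with $\mathbf{W}_s=\mathbf{w}_s\mathbf{w}_s^H$, $\mathbf{W}_b=\mathbf{w}_b\mathbf{w}_b^H$. Here $N^{no}=B^{no}N_0$ is the noise power (bandwidth times noise power spectral density), $\Gamma_{s,0}$ is the SNR threshold required by the semantic user, and $\Gamma_{b,0}=2^{R_0/B^{no}}-1$ is the SINR threshold of the bit-based user. $\mathbf{A}\succeq 0$ means $\mathbf{A}$ is positive semidefinite. *)

theory Defs
  imports "HOL-Analysis.Analysis"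
begin

text \<open>Complex N x N matrices are rendered as complex^'n^'n with a finite index type 'n
  (so N = CARD('n) \<ge> 1). Trace and rank are the HOL-Analysis notions.\<close>

definition hermitian :: "complex^'n^'n \<Rightarrow> bool" where
  "hermitian W \<longleftrightarrow> (\<forall>i j. W $ i $ j = cnj (W $ j $ i))"

definition herm_form :: "complex^'n^'n \<Rightarrow> complex^'n \<Rightarrow> complex" where
  "herm_form W x = (\<Sum>i\<in>UNIV. \<Sum>j\<in>UNIV. cnj (x $ i) * W $ i $ j * x $ j)"

definition psd :: "complex^'n^'n \<Rightarrow> bool" where
  "psd W \<longleftrightarrow> hermitian W \<and> (\<forall>x. 0 \<le> Re (herm_form W x) \<and> Im (herm_form W x) = 0)"

definition outer :: "complex^'n \<Rightarrow> complex^'n^'n" where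
  "outer h = (\<chi> i j. h $ i * cnj (h $ j))"

definition feasible ::
  "complex^'n \<Rightarrow> complex^'n \<Rightarrow> real \<Rightarrow> real \<Rightarrow> real \<Rightarrow> complex^'n^'n \<Rightarrow> complex^'n^'n \<Rightarrow> bool" where
  "feasible hs hb Nno Gs0 Gb0 Ws Wb \<longleftrightarrow>
     hermitian Ws \<and> hermitian Wb \<and>
     Re (trace (outer hs ** Ws)) \<ge> Nno * Gs0 \<and>
     Re (trace (outer hs ** Wb)) \<ge> Gb0 * Re (trace (outer hs ** Ws)) + Nno * Gb0 \<and>
     Re (trace (outer hb ** Wb)) \<ge> Gb0 * Re (trace (outer hb ** Ws)) + Nno * Gb0 \<and>
     psd Ws \<and> psd Wb"

definition objective :: "complex^'n^'n \<Rightarrow> complex^'n^'n \<Rightarrow> real" where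
  "objective Ws Wb = Re (trace Ws + trace Wb)"

end

theory Submission
  imports Defs
begin

(* Every feasible pair (Ws, Wb) can be replaced by a rank-one pair (w w^H, v v^H) with the
   same constraint values and no larger objective. Indeed, for W psd and vectors h, g there is
   a vector w with |h^H w|^2 = h^H W h, |g^H w|^2 = g^H W g and |w|^2 <= Tr W: take an
   orthonormal basis u1, u2 of span {h, g} and w = sqrt (u1^H W u1) u1 + y u2 with
   |y|^2 = u2^H W u2, where the phase of y is chosen (using Cauchy-Schwarz for W) so that the
   cross term of g^H W g is reproduced; then |w|^2 is the trace of the compression of W to
   span {h, g}, which is at most Tr W.
   The rank-one feasible pairs (w, v) form a closed set on which the objective is
   |w|^2 + |v|^2, the squared distance to the origin, so it attains its minimum there; by the
   reduction this minimum is optimal among all feasible pairs. Positive thresholds force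
   w, v to be nonzero, so both optimal matrices have rank one. *)

section \<open>Sesquilinear forms and outer products\<close>

definition sesq :: "complex^'n^'n \<Rightarrow> complex^'n \<Rightarrow> complex^'n \<Rightarrow> complex" where
  "sesq W x y = (\<Sum>i\<in>UNIV. \<Sum>j\<in>UNIV. cnj (x $ i) * W $ i $ j * y $ j)"

definition cinner :: "complex^'n \<Rightarrow> complex^'n \<Rightarrow> complex" where
  "cinner x y = (\<Sum>i\<in>UNIV. cnj (x $ i) * y $ i)"

lemma herm_form_eq_sesq: "herm_form W x = sesq W x x"
  by (simp add: herm_form_def sesq_def)

lemma sesq_add_left: "sesq W (x + y) z = sesq W x z + sesq W y z"
  by (simp add: sesq_def algebra_simps sum.distrib)

lemma sesq_add_right: "sesq W x (y + z) = sesq W x y + sesq W x z"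
  by (simp add: sesq_def algebra_simps sum.distrib)

lemma sesq_scale_left: "sesq W (c *s x) y = cnj c * sesq W x y"
  by (simp add: sesq_def algebra_simps sum_distrib_left)

lemma sesq_scale_right: "sesq W x (c *s y) = c * sesq W x y"
  by (simp add: sesq_def algebra_simps sum_distrib_left)

lemma sesq_commute:
  assumes "hermitian W"
  shows "sesq W y x = cnj (sesq W x y)"
proof -
  have W: "cnj (W $ i $ j) = W $ j $ i" for i j
    using assms unfolding hermitian_def by (metis complex_cnj_cnj)
  have "cnj (sesq W x y) = (\<Sum>i\<in>UNIV. \<Sum>j\<in>UNIV. x $ i * W $ j $ i * cnj (y $ j))"
    by (simp add: sesq_def cnj_sum W mult_ac)
  also have "\<dots> = (\<Sum>j\<in>UNIV. \<Sum>i\<in>UNIV. x $ i * W $ j $ i * cnj (y $ j))"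
    by (rule sum.swap)
  also have "\<dots> = sesq W y x"
    by (simp add: sesq_def mult_ac)
  finally show ?thesis
    by simp
qed

lemma herm_form_scale: "herm_form W (c *s x) = of_real ((cmod c)^2) * herm_form W x"
  by (simp add: herm_form_eq_sesq sesq_scale_left sesq_scale_right complex_norm_square mult_ac
      flip: of_real_power)

lemma herm_form_add:
  assumes "hermitian W"
  shows "Re (herm_form W (x + y)) = Re (herm_form W x) + Re (herm_form W y) + 2 * Re (sesq W x y)"
  using sesq_commute[OF assms, of x y]
  by (simp add: herm_form_eq_sesq sesq_add_left sesq_add_right)

lemma cinner_add_left: "cinner (x + y) z = cinner x z + cinner y z"
  by (simp add: cinner_def algebra_simps sum.distrib)

lemma cinner_add_right: "cinner x (y + z) = cinner x y + cinner x z"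
  by (simp add: cinner_def algebra_simps sum.distrib)

lemma cinner_diff_right: "cinner x (y - z) = cinner x y - cinner x z"
  by (simp add: cinner_def algebra_simps sum_subtractf)

lemma cinner_scale_left: "cinner (c *s x) y = cnj c * cinner x y"
  by (simp add: cinner_def algebra_simps sum_distrib_left)

lemma cinner_scale_right: "cinner x (c *s y) = c * cinner x y"
  by (simp add: cinner_def algebra_simps sum_distrib_left)

lemma cinner_commute: "cinner y x = cnj (cinner x y)"
  by (simp add: cinner_def mult.commute)

lemma cinner_self: "cinner x x = of_real ((norm x)^2)"
  by (simp add: cinner_def norm_vec_def L2_set_def sum_nonneg complex_norm_square mult.commute
      flip: of_real_power)

lemma norm_power2_eq_cinner: "(norm x)^2 = Re (cinner x x)"
  by (simp add: cinner_self del: of_real_power)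

lemma cinner_zero_right [simp]: "cinner x 0 = 0"
  by (simp add: cinner_def)

lemma hermitian_add: "hermitian A \<Longrightarrow> hermitian B \<Longrightarrow> hermitian (A + B)"
  unfolding hermitian_def by (metis complex_cnj_add vector_add_component)

lemma hermitian_diff: "hermitian A \<Longrightarrow> hermitian B \<Longrightarrow> hermitian (A - B)"
  unfolding hermitian_def by (metis complex_cnj_diff vector_minus_component)

lemma hermitian_mat: "hermitian (mat (of_real t))"
  by (simp add: hermitian_def mat_def)

lemma hermitian_outer: "hermitian (outer u)"
  by (simp add: hermitian_def outer_def mult.commute)

lemma sesq_outer: "sesq (outer u) x y = cinner x u * cinner u y"
  by (simp add: sesq_def outer_def cinner_def sum_product mult_ac)

lemma herm_form_outer: "herm_form (outer u) x = of_real ((cmod (cinner x u))^2)"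
  by (simp add: herm_form_eq_sesq sesq_outer cinner_commute[of u x] complex_norm_square
      flip: of_real_power)

lemma psd_outer: "psd (outer u)"
  by (simp add: psd_def hermitian_outer herm_form_outer)

lemma trace_outer: "trace (outer u) = of_real ((norm u)^2)"
  by (simp add: trace_def outer_def norm_vec_def L2_set_def sum_nonneg complex_norm_square
      flip: of_real_power)

lemma trace_outer_mult: "trace (outer h ** W) = herm_form W h"
proof -
  have "trace (outer h ** W) = (\<Sum>k\<in>UNIV. \<Sum>j\<in>UNIV. h $ k * cnj (h $ j) * W $ j $ k)"
    by (simp add: trace_def matrix_matrix_mult_def outer_def)
  also have "\<dots> = (\<Sum>j\<in>UNIV. \<Sum>k\<in>UNIV. h $ k * cnj (h $ j) * W $ j $ k)"
    by (rule sum.swap)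
  finally show ?thesis
    by (simp add: herm_form_def mult_ac)
qed

lemma outer_mult_outer: "outer u ** outer v = (\<chi> i j. cinner u v * (u $ i * cnj (v $ j)))"
  by (simp add: matrix_matrix_mult_def outer_def cinner_def vec_eq_iff
      sum_distrib_left sum_distrib_right mult_ac)

section \<open>Projections and the trace\<close>

lemma matrix_add_rdistrib: "(A + B) ** C = A ** C + B ** (C :: 'a::semiring_1^'n^'n)"
  by (simp add: vec_eq_iff matrix_matrix_mult_def sum.distrib algebra_simps)

lemma matrix_diff_rdistrib: "(A - B) ** C = A ** C - B ** (C :: 'a::ring_1^'n^'n)"
  by (simp add: vec_eq_iff matrix_matrix_mult_def sum_subtractf algebra_simps)

lemma matrix_diff_ldistrib: "C ** (A - B) = C ** A - C ** (B :: 'a::ring_1^'n^'n)"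
  by (simp add: vec_eq_iff matrix_matrix_mult_def sum_subtractf algebra_simps)

lemma trace_sandwich:
  assumes "hermitian Q"
  shows "trace (Q ** W ** Q) = (\<Sum>k\<in>UNIV. herm_form W (column k Q))"
proof -
  have Q: "cnj (Q $ i $ j) = Q $ j $ i" for i j
    using assms unfolding hermitian_def by (metis complex_cnj_cnj)
  have "trace (Q ** W ** Q) = (\<Sum>k\<in>UNIV. \<Sum>j\<in>UNIV. \<Sum>i\<in>UNIV. Q $ k $ i * W $ i $ j * Q $ j $ k)"
    by (simp add: trace_def matrix_matrix_mult_def sum_distrib_right)
  also have "\<dots> = (\<Sum>k\<in>UNIV. \<Sum>i\<in>UNIV. \<Sum>j\<in>UNIV. Q $ k $ i * W $ i $ j * Q $ j $ k)"
    by (rule sum.cong[OF refl], rule sum.swap)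
  finally show ?thesis
    by (simp add: herm_form_def column_def Q)
qed

lemma trace_projection_le:
  assumes P: "hermitian P" "P ** P = P" and W: "psd W"
  shows "Re (trace (P ** W)) \<le> Re (trace W)"
proof -
  define Q where "Q = mat 1 - P"
  have "hermitian Q"
    using hermitian_diff[OF hermitian_mat[of 1] P(1)] by (simp add: Q_def)
  have "Q ** Q = Q"
    using P(2) by (simp add: Q_def matrix_diff_rdistrib matrix_diff_ldistrib)
  then have "trace (Q ** W) = trace (Q ** W ** Q)"
    by (metis matrix_mul_assoc trace_mul_sym)
  also have "\<dots> = (\<Sum>k\<in>UNIV. herm_form W (column k Q))"
    using \<open>hermitian Q\<close> by (rule trace_sandwich)
  finally have "Re (trace (Q ** W)) \<ge> 0"
    using W by (simp add: psd_def sum_nonneg)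
  moreover have "trace (Q ** W) = trace W - trace (P ** W)"
    by (simp add: Q_def matrix_diff_rdistrib trace_sub)
  ultimately show ?thesis
    by simp
qed

lemma outer_idempotent: "cinner u u = 1 \<Longrightarrow> outer u ** outer u = outer u"
  by (simp add: outer_mult_outer) (simp add: outer_def)

lemma outer_mult_orthogonal: "cinner u v = 0 \<Longrightarrow> outer u ** outer v = 0"
  by (simp add: outer_mult_outer vec_eq_iff)

lemma herm_form_unit_le_trace:
  assumes "cinner u u = 1" "psd W"
  shows "Re (herm_form W u) \<le> Re (trace W)"
  using trace_projection_le[OF hermitian_outer outer_idempotent[OF assms(1)] assms(2)]
  by (simp add: trace_outer_mult)

lemma herm_form_orthonormal_le_trace:
  assumes "cinner u u = 1" "cinner v v = 1" "cinner u v = 0" "psd W"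
  shows "Re (herm_form W u) + Re (herm_form W v) \<le> Re (trace W)"
proof -
  let ?P = "outer u + outer v"
  have "cinner v u = 0"
    using assms(3) cinner_commute[of u v] by simp
  then have "?P ** ?P = ?P"
    using assms(1-3)
    unfolding matrix_add_ldistrib matrix_add_rdistrib
    by (simp add: outer_idempotent outer_mult_orthogonal)
  with hermitian_add[OF hermitian_outer hermitian_outer]
  have "Re (trace (?P ** W)) \<le> Re (trace W)"
    using assms(4) by (rule trace_projection_le)
  then show ?thesis
    by (simp add: matrix_add_rdistrib trace_add trace_outer_mult)
qed

section \<open>Rank-one reduction of a positive semidefinite matrix\<close>

lemma psd_cauchy_schwarz:
  assumes W: "psd W"
  shows "(cmod (sesq W x y))^2 \<le> Re (herm_form W x) * Re (herm_form W y)"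
proof -
  define p where "p = Re (herm_form W x)"
  define q where "q = Re (herm_form W y)"
  define r where "r = sesq W x y"
  have "hermitian W" "0 \<le> q"
    using W by (simp_all add: psd_def q_def)
  have key: "0 \<le> p + 2 * t * (cmod r)^2 + t^2 * (cmod r)^2 * q" for t
  proof -
    let ?l = "of_real t * cnj r"
    have "0 \<le> Re (herm_form W (x + ?l *s y))"
      using W by (simp add: psd_def)
    also have "\<dots> = p + (cmod ?l)^2 * q + 2 * Re (?l * r)"
      using herm_form_add[OF \<open>hermitian W\<close>, of x "?l *s y"]
      by (simp add: herm_form_scale sesq_scale_right p_def q_def r_def)
    also have "(cmod ?l)^2 = t^2 * (cmod r)^2"
      by (simp add: norm_mult power_mult_distrib)
    also have "Re (?l * r) = t * (cmod r)^2"
      by (simp add: cmod_power2 algebra_simps) (simp add: power2_eq_square)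
    finally show ?thesis
      by linarith
  qed
  show ?thesis
  proof (cases "q = 0")
    case True
    have "0 \<le> p + 2 * (- (p + 1) / (2 * (cmod r)^2)) * (cmod r)^2"
      using key[of "- (p + 1) / (2 * (cmod r)^2)"] True by simp
    then have "r = 0"
      by (cases "r = 0") (simp_all add: field_simps)
    then show ?thesis
      using W by (simp add: r_def psd_def)
  next
    case False
    with \<open>0 \<le> q\<close> have "0 < q"
      by simp
    have "0 \<le> p + 2 * (- 1 / q) * (cmod r)^2 + (- 1 / q)^2 * (cmod r)^2 * q"
      by (rule key)
    with \<open>0 < q\<close> have "(cmod r)^2 \<le> p * q"
      by (simp add: field_simps power2_eq_square)
    then show ?thesis
      by (simp add: p_def q_def r_def)
  qed
qed

lemma exists_modulus_Re_mult:
  fixes s :: complex and c m :: real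
  assumes "0 \<le> m" "\<bar>c\<bar> \<le> cmod s * sqrt m"
  shows "\<exists>z. (cmod z)^2 = m \<and> Re (s * z) = c"
proof (cases "s = 0")
  case True
  then show ?thesis
    using assms by (intro exI[of _ "of_real (sqrt m)"]) simp
next
  case False
  have "c^2 \<le> (cmod s * sqrt m)^2"
    using assms(2) by (metis abs_ge_zero abs_le_square_iff abs_of_nonneg order.trans)
  then have d: "(sqrt ((cmod s)^2 * m - c^2))^2 = (cmod s)^2 * m - c^2"
    using assms(1) by (simp add: power_mult_distrib)
  define z where "z = cnj s * Complex c (sqrt ((cmod s)^2 * m - c^2)) / of_real ((cmod s)^2)"
  have "s * z = Complex c (sqrt ((cmod s)^2 * m - c^2))"
    using False by (simp add: z_def complex_norm_square flip: of_real_power)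
  then have "Re (s * z) = c"
    by simp
  moreover have "(cmod z)^2 = m"
    using False assms(1)
    by (simp add: z_def norm_mult norm_divide norm_power complex_norm d real_sqrt_mult)
      (simp add: field_simps power2_eq_square)
  ultimately show ?thesis
    by blast
qed

lemma cmod_add_power2: "(cmod (p + q))^2 = (cmod p)^2 + (cmod q)^2 + 2 * Re (p * cnj q)"
  unfolding cmod_power2 by (simp add: power2_eq_square algebra_simps)

(* The psd matrix [[m11, m12], [cnj m12, m22]] and the rank-one matrix built from
   (sqrt m11, y) have the same diagonal; the phase of y is chosen so that their quadratic
   forms also agree at the vector (a, b). *)
lemma exists_rank_one_2x2_form:
  fixes a b m12 :: complex and m11 m22 :: real
  assumes "0 \<le> m11" "0 \<le> m22" "(cmod m12)^2 \<le> m11 * m22"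
  shows "\<exists>y. (cmod y)^2 = m22 \<and>
    (cmod (cnj a * of_real (sqrt m11) + cnj b * y))^2
      = (cmod a)^2 * m11 + (cmod b)^2 * m22 + 2 * Re (cnj a * b * m12)"
proof -
  define s where "s = cnj a * b * of_real (sqrt m11)"
  have "cmod m12 \<le> sqrt m11 * sqrt m22"
    using real_le_rsqrt[OF assms(3)] by (simp add: real_sqrt_mult)
  then have "\<bar>Re (cnj a * b * m12)\<bar> \<le> cmod s * sqrt m22"
    using abs_Re_le_cmod[of "cnj a * b * m12"] assms(1)
    by (simp add: s_def norm_mult mult_left_mono mult.assoc order_trans)
  then obtain z where z: "(cmod z)^2 = m22" "Re (s * z) = Re (cnj a * b * m12)"
    using exists_modulus_Re_mult[OF assms(2)] by blast
  have "(cmod (cnj a * of_real (sqrt m11) + cnj b * cnj z))^2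
      = (cmod a)^2 * m11 + (cmod b)^2 * m22 + 2 * Re (s * z)"
    using assms(1) z(1) by (simp add: cmod_add_power2 norm_mult power_mult_distrib s_def mult_ac)
  then show ?thesis
    using z by (intro exI[of _ "cnj z"]) simp
qed

lemma cinner_herm_form_scale:
  assumes "(cmod (cinner x w))^2 = Re (herm_form W x)"
  shows "(cmod (cinner (c *s x) w))^2 = Re (herm_form W (c *s x))"
  using assms by (simp add: cinner_scale_left herm_form_scale norm_mult power_mult_distrib)

lemma rank_one_on_unit_vector:
  assumes W: "psd W" and u: "cinner u u = 1"
  shows "\<exists>w. (norm w)^2 \<le> Re (trace W) \<and> (cmod (cinner u w))^2 = Re (herm_form W u)"
proof -
  define w where "w = of_real (sqrt (Re (herm_form W u))) *s u"
  have "0 \<le> Re (herm_form W u)"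
    using W by (simp add: psd_def)
  then have "cinner u w = of_real (sqrt (Re (herm_form W u)))"
            "(norm w)^2 = Re (herm_form W u)"
    using u by (simp_all add: w_def norm_power2_eq_cinner cinner_scale_left cinner_scale_right
        flip: of_real_mult)
  then show ?thesis
    using herm_form_unit_le_trace[OF u W] \<open>0 \<le> Re (herm_form W u)\<close>
    by (intro exI[of _ w]) simp
qed

lemma rank_one_on_orthonormal_pair:
  assumes W: "psd W" and uv: "cinner u u = 1" "cinner v v = 1" "cinner u v = 0"
  shows "\<exists>w. (norm w)^2 \<le> Re (trace W) \<and> (cmod (cinner u w))^2 = Re (herm_form W u) \<and>
    (cmod (cinner (a *s u + b *s v) w))^2 = Re (herm_form W (a *s u + b *s v))"
proof -
  define m11 where "m11 = Re (herm_form W u)"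
  define m22 where "m22 = Re (herm_form W v)"
  have "hermitian W" "0 \<le> m11" "0 \<le> m22"
    using W by (simp_all add: psd_def m11_def m22_def)
  obtain y where y: "(cmod y)^2 = m22"
    "(cmod (cnj a * of_real (sqrt m11) + cnj b * y))^2
      = (cmod a)^2 * m11 + (cmod b)^2 * m22 + 2 * Re (cnj a * b * sesq W u v)"
    using exists_rank_one_2x2_form[OF \<open>0 \<le> m11\<close> \<open>0 \<le> m22\<close>
        psd_cauchy_schwarz[OF W, of u v, folded m11_def m22_def]]
    by blast
  define w where "w = of_real (sqrt m11) *s u + y *s v"
  have vu: "cinner v u = 0"
    using uv(3) cinner_commute[of u v] by simp
  have "cinner u w = of_real (sqrt m11)"
    by (simp add: w_def cinner_add_right cinner_scale_right uv)
  moreover have "cinner (a *s u + b *s v) w = cnj a * of_real (sqrt m11) + cnj b * y"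
    by (simp add: w_def cinner_add_left cinner_add_right cinner_scale_left cinner_scale_right uv vu)
  moreover have "Re (herm_form W (a *s u + b *s v))
      = (cmod a)^2 * m11 + (cmod b)^2 * m22 + 2 * Re (cnj a * b * sesq W u v)"
    by (simp add: herm_form_add[OF \<open>hermitian W\<close>] herm_form_scale sesq_scale_left sesq_scale_right
        m11_def m22_def)
      (simp add: algebra_simps)
  moreover have "(norm w)^2 = m11 + m22"
    using \<open>0 \<le> m11\<close> y(1)
    by (simp add: norm_power2_eq_cinner w_def cinner_add_left cinner_add_right cinner_scale_left
        cinner_scale_right uv vu mult.commute[of "cnj y"] flip: complex_norm_square)
  ultimately show ?thesis
    using y herm_form_orthonormal_le_trace[OF uv W] \<open>0 \<le> m11\<close>
    by (intro exI[of _ w]) (simp add: m11_def m22_def)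
qed

lemma cinner_normalize:
  assumes "x \<noteq> 0"
  shows "cinner (of_real (1 / norm x) *s x) (of_real (1 / norm x) *s x) = 1"
    and "of_real (norm x) *s (of_real (1 / norm x) *s x) = x"
  using assms
  unfolding cinner_scale_left cinner_scale_right cinner_self[of x]
  by (simp_all add: vector_smult_assoc power2_eq_square flip: of_real_mult)

lemma psd_rank_one_reduction:
  assumes W: "psd W" and "h \<noteq> 0"
  shows "\<exists>w. (norm w)^2 \<le> Re (trace W) \<and> (cmod (cinner h w))^2 = Re (herm_form W h) \<and>
    (cmod (cinner g w))^2 = Re (herm_form W g)"
proof -
  define u where "u = of_real (1 / norm h) *s h"
  have u: "cinner u u = 1" "of_real (norm h) *s u = h"
    using cinner_normalize[OF \<open>h \<noteq> 0\<close>] by (simp_all add: u_def)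
  define a where "a = cinner u g"
  show ?thesis
  proof (cases "g = a *s u")
    case True
    obtain w where w: "(norm w)^2 \<le> Re (trace W)" "(cmod (cinner u w))^2 = Re (herm_form W u)"
      using rank_one_on_unit_vector[OF W u(1)] by blast
    have "(cmod (cinner h w))^2 = Re (herm_form W h)"
      using cinner_herm_form_scale[OF w(2), of "of_real (norm h)"] by (simp only: u(2))
    moreover have "(cmod (cinner g w))^2 = Re (herm_form W g)"
      using cinner_herm_form_scale[OF w(2), of a] by (simp only: True[symmetric])
    ultimately show ?thesis
      using w(1) by blast
  next
    case False
    define v where "v = of_real (1 / norm (g - a *s u)) *s (g - a *s u)"
    have v: "cinner v v = 1" "of_real (norm (g - a *s u)) *s v = g - a *s u"
      using cinner_normalize[of "g - a *s u"] False by (simp_all add: v_def)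
    have "cinner u v = 0"
      using u(1) by (simp add: v_def a_def cinner_scale_right cinner_diff_right)
    moreover have "a *s u + of_real (norm (g - a *s u)) *s v = g"
      by (simp add: v(2))
    ultimately obtain w where w: "(norm w)^2 \<le> Re (trace W)"
      "(cmod (cinner u w))^2 = Re (herm_form W u)" "(cmod (cinner g w))^2 = Re (herm_form W g)"
      using rank_one_on_orthonormal_pair[OF W u(1) v(1), of a "of_real (norm (g - a *s u))"]
      by metis
    have "(cmod (cinner h w))^2 = Re (herm_form W h)"
      using cinner_herm_form_scale[OF w(2), of "of_real (norm h)"] by (simp only: u(2))
    then show ?thesis
      using w(1,3) by blast
  qed
qed

section \<open>Rank-one optimal beamformers\<close>

lemma feasible_outer_iff:
  "feasible hs hb N Gs Gb (outer w) (outer v) \<longleftrightarrow>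
     N * Gs \<le> (cmod (cinner hs w))^2 \<and>
     Gb * (cmod (cinner hs w))^2 + N * Gb \<le> (cmod (cinner hs v))^2 \<and>
     Gb * (cmod (cinner hb w))^2 + N * Gb \<le> (cmod (cinner hb v))^2"
  by (simp add: feasible_def hermitian_outer psd_outer trace_outer_mult herm_form_outer
      del: of_real_power)

lemma objective_outer: "objective (outer w) (outer v) = (norm (w, v))^2"
  by (simp add: objective_def trace_outer norm_Pair del: of_real_power)

lemma feasible_rank_one_reduction:
  assumes F: "feasible hs hb N Gs Gb Ws Wb" and "hs \<noteq> 0"
  shows "\<exists>w v. feasible hs hb N Gs Gb (outer w) (outer v) \<and>
    objective (outer w) (outer v) \<le> objective Ws Wb"
proof -
  have "psd Ws" "psd Wb"
    using F by (simp_all add: feasible_def)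
  obtain w where w: "(norm w)^2 \<le> Re (trace Ws)"
      "(cmod (cinner hs w))^2 = Re (trace (outer hs ** Ws))"
      "(cmod (cinner hb w))^2 = Re (trace (outer hb ** Ws))"
    using psd_rank_one_reduction[OF \<open>psd Ws\<close> \<open>hs \<noteq> 0\<close>] by (auto simp: trace_outer_mult)
  obtain v where v: "(norm v)^2 \<le> Re (trace Wb)"
      "(cmod (cinner hs v))^2 = Re (trace (outer hs ** Wb))"
      "(cmod (cinner hb v))^2 = Re (trace (outer hb ** Wb))"
    using psd_rank_one_reduction[OF \<open>psd Wb\<close> \<open>hs \<noteq> 0\<close>] by (auto simp: trace_outer_mult)
  have "feasible hs hb N Gs Gb (outer w) (outer v)"
    unfolding feasible_outer_iff using F w v by (simp add: feasible_def)
  moreover have "objective (outer w) (outer v) \<le> objective Ws Wb"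
    using w(1) v(1) by (simp add: objective_def trace_outer del: of_real_power)
  ultimately show ?thesis
    by blast
qed

lemma closed_rank_one_feasible:
  "closed {p. feasible hs hb N Gs Gb (outer (fst p)) (outer (snd p))}"
  unfolding feasible_outer_iff cinner_def
  by (intro closed_Collect_conj closed_Collect_le continuous_intros)

lemma herm_form_mat: "herm_form (mat (of_real t)) x = of_real (t * (norm x)^2)"
proof -
  have "herm_form (mat (of_real t)) x = of_real t * cinner x x"
    unfolding herm_form_def mat_def cinner_def
    by (simp add: sum_distrib_left mult_ac if_distrib if_distribR sum.delta cong: if_cong)
  then show ?thesis
    by (simp add: cinner_self)
qed

lemma psd_mat: "0 \<le> t \<Longrightarrow> psd (mat (of_real t))"
  by (simp add: psd_def hermitian_mat herm_form_mat)

lemma exists_feasible: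
  assumes "hs \<noteq> 0" "hb \<noteq> 0" "0 \<le> N" "0 \<le> Gs" "0 \<le> Gb"
  shows "\<exists>Ws Wb. feasible hs hb N Gs Gb Ws Wb"
proof -
  define s where "s = N * Gs / (norm hs)^2"
  define t where "t = Gb * s + N * Gb * (1 / (norm hs)^2 + 1 / (norm hb)^2)"
  have "0 \<le> s" "0 \<le> t"
    using assms by (simp_all add: s_def t_def)
  moreover have "N * Gs \<le> s * (norm hs)^2"
    using assms by (simp add: s_def)
  moreover have "Gb * (s * (norm h)^2) + N * Gb \<le> t * (norm h)^2" if "h = hs \<or> h = hb" for h
    using assms that by (auto simp: t_def field_simps)
  ultimately have "feasible hs hb N Gs Gb (mat (of_real s)) (mat (of_real t))"
    by (simp add: feasible_def hermitian_mat psd_mat trace_outer_mult herm_form_mat)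
  then show ?thesis
    by blast
qed

lemma rank_outer:
  fixes w :: "complex^'n"
  assumes "w \<noteq> 0"
  shows "rank (outer w) = 1"
proof -
  define c where "c = (\<chi> j. cnj (w $ j))"
  obtain k where k: "w $ k \<noteq> 0"
    using assms by (auto simp: vec_eq_iff)
  have "c \<noteq> 0"
    using k by (auto simp: c_def vec_eq_iff)
  have row: "row i (outer w) = w $ i *s c" for i
    by (simp add: row_def outer_def c_def vec_eq_iff)
  have "rows (outer w) \<subseteq> vec.span {c}"
  proof
    fix r
    assume "r \<in> rows (outer w)"
    then obtain i where "r = w $ i *s c"
      by (auto simp: rows_def row)
    then show "r \<in> vec.span {c}"
      by (simp add: vec.span_scale vec.span_base)
  qed
  moreover have "(1 / w $ k) *s row k (outer w) \<in> vec.span (rows (outer w))"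
    by (intro vec.span_scale vec.span_base) (auto simp: rows_def)
  then have "c \<in> vec.span (rows (outer w))"
    unfolding row vector_smult_assoc using k by simp
  ultimately have "vec.span (rows (outer w)) = vec.span {c}"
    by (simp add: vec.span_eq)
  then have "vec.dim (rows (outer w)) = vec.dim {c}"
    by (metis vec.dim_span)
  with \<open>c \<noteq> 0\<close> show ?thesis
    by (simp add: row_rank_def_gen)
qed

lemma exists_rank_one_optimum:
  assumes "hs \<noteq> 0" "hb \<noteq> 0" "0 \<le> N" "0 \<le> Gs" "0 \<le> Gb"
  shows "\<exists>w v. feasible hs hb N Gs Gb (outer w) (outer v) \<and>
    (\<forall>Ws Wb. feasible hs hb N Gs Gb Ws Wb \<longrightarrow> objective (outer w) (outer v) \<le> objective Ws Wb)"
proof -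
  let ?R = "{p. feasible hs hb N Gs Gb (outer (fst p)) (outer (snd p))}"
  obtain Ws Wb where "feasible hs hb N Gs Gb Ws Wb"
    using exists_feasible[OF assms] by blast
  then obtain w v where "feasible hs hb N Gs Gb (outer w) (outer v)"
    using feasible_rank_one_reduction[OF _ \<open>hs \<noteq> 0\<close>] by blast
  then have "?R \<noteq> {}"
    by auto
  then obtain p where p: "p \<in> ?R" and min: "\<And>q. q \<in> ?R \<Longrightarrow> dist 0 p \<le> dist 0 q"
    by (rule distance_attains_inf[where a = 0, OF closed_rank_one_feasible]) blast
  have "objective (outer (fst p)) (outer (snd p)) \<le> objective Ws Wb"
    if F: "feasible hs hb N Gs Gb Ws Wb" for Ws Wb
  proof -
    obtain w v where "(w, v) \<in> ?R" and wv: "objective (outer w) (outer v) \<le> objective Ws Wb"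
      using feasible_rank_one_reduction[OF F \<open>hs \<noteq> 0\<close>] by auto
    have "objective (outer (fst p)) (outer (snd p)) = (norm p)^2"
      by (simp add: objective_outer)
    also have "\<dots> \<le> (norm (w, v))^2"
      using min[OF \<open>(w, v) \<in> ?R\<close>] by (simp add: power_mono)
    also have "\<dots> = objective (outer w) (outer v)"
      by (simp add: objective_outer)
    finally show ?thesis
      using wv by linarith
  qed
  then show ?thesis
    using p by blast
qed

theorem proposition1:
  fixes hs hb :: "complex^'n" and Nno Gs0 Gb0 :: real
  assumes "hs \<noteq> 0" and "hb \<noteq> 0"
    and "Nno > 0" and "Gs0 > 0" and "Gb0 > 0"
  shows "\<exists>Ws Wb. feasible hs hb Nno Gs0 Gb0 Ws Wb
           \<and> (\<forall>Ws' Wb'. feasible hs hb Nno Gs0 Gb0 Ws' Wb' \<longrightarrow> objective Ws Wb \<le> objective Ws' Wb')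
           \<and> rank Ws = 1 \<and> rank Wb = 1"
proof -
  obtain w v where F: "feasible hs hb Nno Gs0 Gb0 (outer w) (outer v)"
    and opt: "\<forall>Ws Wb. feasible hs hb Nno Gs0 Gb0 Ws Wb \<longrightarrow>
                objective (outer w) (outer v) \<le> objective Ws Wb"
    using exists_rank_one_optimum[OF assms(1,2) assms(3-5)[THEN less_imp_le]] by blast
  have "0 < Nno * Gs0" "0 < Nno * Gb0" "0 \<le> Gb0 * (cmod (cinner hs w))^2"
    using assms(3-5) by simp_all
  then have "w \<noteq> 0" "v \<noteq> 0"
    using F by (auto simp: feasible_outer_iff)
  then show ?thesis
    using F opt by (blast intro: rank_outer)
qed

end
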